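(* Let $G=(V,E)$ be a $k$-uniform cored hypergraph ($k\ge3$) with Laplacian tensor $\mathcal L$. Then $\lambda=1$ is an H-eigenvalue of $\mathcal L$.
   Context: A $k$-uniform hypergraph $G=(V,E)$ has $V=[n]$ and a nonempty set $E$ of $k$-element subsets of $V$; $d_i$ is the number of edges containing $i$. $G$ is cored if every edge contains a vertex of degree one. The Laplacian tensor $\mathcal L=\mathcal D-\mathcal A$ ($\mathcal D$ diagonal with entries $d_i$, $\mathcal A$ with entries $\frac1{(k-1)!}$ at index tuples forming an edge and $0$ otherwise) satisfies $(\mathcal L\mathbf x^{k-1})_i=d_ix_i^{k-1}-\sum_{e\in E,\,i\in e}\prod_{s\in e\setminus\{i\}}x_s$. A real $\lambda$ is an H-eigenvalue if some nonzero $\mathbf x\in\mathbb R^n$ satisfies $(\mathcal L\mathbf x^{k-1})_i=\lambda x_i^{k-1}$ for all $i$. *)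

theory Defs
  imports "HOL-Analysis.Analysis"
begin

definition k_uniform_hypergraph :: "nat \<Rightarrow> nat \<Rightarrow> nat set set \<Rightarrow> bool" where
  "k_uniform_hypergraph n k E \<longleftrightarrow>
     E \<noteq> {} \<and> (\<forall>e\<in>E. e \<subseteq> {1..n} \<and> card e = k)"

definition hdegree :: "nat set set \<Rightarrow> nat \<Rightarrow> nat" where
  "hdegree E i = card {e\<in>E. i \<in> e}"

definition cored :: "nat set set \<Rightarrow> bool" where
  "cored E \<longleftrightarrow> (\<forall>e\<in>E. \<exists>i\<in>e. hdegree E i = 1)"

text \<open>(L x^{k-1})_i = d_i x_i^{k-1} - sum over edges e containing i of the
  product of x_s over s in e - {i}.\<close>
definition laplacian_apply :: "nat set set \<Rightarrow> nat \<Rightarrow> (nat \<Rightarrow> real) \<Rightarrow> nat \<Rightarrow> real" where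
  "laplacian_apply E k x i =
     real (hdegree E i) * x i ^ (k - 1) - (\<Sum>e\<in>{e\<in>E. i \<in> e}. \<Prod>s\<in>e - {i}. x s)"

definition H_eigenvalue :: "nat \<Rightarrow> nat \<Rightarrow> nat set set \<Rightarrow> real \<Rightarrow> bool" where
  "H_eigenvalue n k E lam \<longleftrightarrow>
     (\<exists>x :: nat \<Rightarrow> real. (\<exists>i\<in>{1..n}. x i \<noteq> 0) \<and>
        (\<forall>i\<in>{1..n}. laplacian_apply E k x i = lam * x i ^ (k - 1)))"

end

theory Submission
  imports Defs
begin

text \<open>The coordinate vector of a vertex \<open>i\<close> is an H-eigenvector with eigenvalue \<open>d\<^sub>i\<close>:
  for \<open>k \<ge> 3\<close> every product over \<open>e - {j}\<close> has at least two factors, at most one of which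
  is \<open>x\<^sub>i = 1\<close>, so the adjacency part of the Laplacian vanishes. In a cored hypergraph some
  vertex has degree one.\<close>

lemma prod_coordinate_vector_eq_0:
  fixes i :: 'a
  assumes "finite A" "card A \<ge> 2"
  shows "(\<Prod>s\<in>A. if s = i then 1 else 0 :: real) = 0"
proof -
  have "\<not> A \<subseteq> {i}"
    using assms card_mono[of "{i}" A] by auto
  then obtain s where "s \<in> A" "s \<noteq> i" by auto
  then show ?thesis using assms(1) by (intro prod_zero) auto
qed

lemma laplacian_apply_coordinate_vector:
  assumes "\<And>e. e \<in> E \<Longrightarrow> finite e \<and> card e \<ge> 3"
  shows "laplacian_apply E k (\<lambda>s. if s = i then 1 else 0) j
           = real (hdegree E j) * (if j = i then 1 else 0) ^ (k - 1)"
proof -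
  have "(\<Prod>s\<in>e - {j}. if s = i then 1 else 0 :: real) = 0" if "e \<in> E" for e
    using assms[OF that] card_Diff_singleton_if[of e j]
    by (intro prod_coordinate_vector_eq_0) auto
  then show ?thesis by (simp add: laplacian_apply_def)
qed

lemma H_eigenvalue_hdegree:
  assumes "k_uniform_hypergraph n k E" "k \<ge> 3" "i \<in> {1..n}"
  shows "H_eigenvalue n k E (real (hdegree E i))"
proof -
  have "finite e \<and> card e \<ge> 3" if "e \<in> E" for e
    using assms(1,2) that unfolding k_uniform_hypergraph_def
    by (metis card.infinite not_numeral_le_zero)
  then show ?thesis
    unfolding H_eigenvalue_def using assms(2,3)
    by (intro exI[of _ "\<lambda>s. if s = i then 1 else 0"])
       (auto simp: laplacian_apply_coordinate_vector)
qed

theorem proposition5p5: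
  fixes n k :: nat and E :: "nat set set"
  assumes "k_uniform_hypergraph n k E"
    and "k \<ge> 3"
    and "cored E"
  shows "H_eigenvalue n k E 1"
proof -
  obtain e where "e \<in> E" "e \<subseteq> {1..n}"
    using assms(1) unfolding k_uniform_hypergraph_def by auto
  then obtain i where "i \<in> {1..n}" "hdegree E i = 1"
    using assms(3) unfolding cored_def by blast
  then show ?thesis
    using H_eigenvalue_hdegree[OF assms(1,2)] by fastforce
qed

end
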